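(* Let $1\le d<n$ be integers and $X=P(d,n)$. Then there exists a family $\mathcal{F}_X$ of functions $\phi:V(X)\to\{-1,0,1\}$ such that: (i) for every $\phi\in\mathcal{F}_X$, both $-1$ and $1$ lie in the image of $\phi$; (ii) for every $\phi\in\mathcal{F}_X$ and every maximal clique $K$ of $X$, $\sum_{v\in V(K)}\phi(v)=0$; (iii) viewing each $\phi$ as a vector in $\mathbb{R}^{V(X)}$, $\mathcal{F}_X$ contains a linearly independent subset of cardinality $\binom{n-1}{d}$.
   Context: For integers $1\le d\le n$, let $S_{d,n}$ be the set of all $d$-tuples with entries in $[n]=\{1,\dots,n\}$ and pairwise distinct entries. The partial permutation graph $P(d,n)$ has vertex set $S_{d,n}$, two $d$-tuples being adjacent if and only if they differ in exactly one coordinate. *)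

theory Defs
  imports Complex_Main
begin

definition pp_vertices :: "nat \<Rightarrow> nat \<Rightarrow> nat list set" where
  "pp_vertices d n = {xs. length xs = d \<and> distinct xs \<and> set xs \<subseteq> {1..n}}"

definition pp_adj :: "nat \<Rightarrow> nat list \<Rightarrow> nat list \<Rightarrow> bool" where
  "pp_adj d xs ys \<longleftrightarrow> card {i. i < d \<and> xs ! i \<noteq> ys ! i} = 1"

definition pp_clique :: "nat \<Rightarrow> nat \<Rightarrow> nat list set \<Rightarrow> bool" where
  "pp_clique d n K \<longleftrightarrow> K \<subseteq> pp_vertices d n \<and>
     (\<forall>x\<in>K. \<forall>y\<in>K. x \<noteq> y \<longrightarrow> pp_adj d x y)"

definition pp_maximal_clique :: "nat \<Rightarrow> nat \<Rightarrow> nat list set \<Rightarrow> bool" where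
  "pp_maximal_clique d n K \<longleftrightarrow> pp_clique d n K \<and>
     (\<forall>K'. pp_clique d n K' \<and> K \<subseteq> K' \<longrightarrow> K' = K)"

definition lin_indep_on :: "'a set \<Rightarrow> ('a \<Rightarrow> real) set \<Rightarrow> bool" where
  "lin_indep_on V S \<longleftrightarrow>
     (\<forall>c. (\<forall>v\<in>V. (\<Sum>\<phi>\<in>S. c \<phi> * \<phi> v) = 0) \<longrightarrow> (\<forall>\<phi>\<in>S. c \<phi> = 0))"

end

theory Submission imports Defs "HOL-Combinatorics.Permutations" begin

(* For every (d+1)-subset T of [n] define a signed indicator phi_T on P(d,n):
   a tuple v with set v \<subseteq> T misses exactly one element b of T, and phi_T(v) is the sign of
   the permutation that turns the increasing enumeration of T into the word v @ [b];
   all other tuples get 0.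
   (1) Exchanging coordinate i of v for the missing element b swaps positions i and d of
       that word, so phi_T changes sign.  This gives both values +1 and -1.
   (2) Every maximal clique is a line {y. y agrees with x off coordinate i}.  A line
       meets the support of phi_T in none or exactly two tuples, related by such an
       exchange, so the sum of phi_T over a maximal clique vanishes.
   (3) For the C(n-1,d) sets T containing n, the tuple sorted(T - {n}) lies in the support
       of phi_T only, so these functions are triangular, hence linearly independent. *)

section \<open>Sign of a word relative to a reference enumeration\<close>

text \<open>For distinct words r and L with the same letters, perm_of r L is the permutation of
  positions sending k to the position in r of the k-th letter of L.\<close>
definition perm_of :: "nat list \<Rightarrow> nat list \<Rightarrow> nat \<Rightarrow> nat" where
  "perm_of r L = (\<lambda>k. if k < length L then inv_into {..<length r} ((!) r) (L!k) else k)"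

lemma perm_of_permutes:
  assumes "distinct r" "distinct L" "set L = set r"
  shows "perm_of r L permutes {..<length L}"
proof -
  have len: "length r = length L" using assms by (metis distinct_card)
  have "bij_betw ((!) L) {..<length L} (set L)" using assms by (intro bij_betw_nth) auto
  moreover have "bij_betw (inv_into {..<length r} ((!) r)) (set r) {..<length r}"
    using assms by (intro bij_betw_inv_into bij_betw_nth) auto
  ultimately have "bij_betw (inv_into {..<length r} ((!) r) \<circ> (!) L) {..<length L} {..<length L}"
    using bij_betw_trans assms len by fastforce
  then have "bij_betw (perm_of r L) {..<length L} {..<length L}"
    by (rule bij_betw_cong[THEN iffD1, rotated]) (auto simp: perm_of_def)
  then show ?thesis by (rule bij_imp_permutes) (auto simp: perm_of_def)
qed

text \<open>Swapping two letters of the word composes perm_of with a transposition,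
  so the sign flips.\<close>
lemma sign_perm_of_swap:
  assumes "distinct r" "distinct L" "set L = set r" "i < j" "j < length L"
  shows "sign (perm_of r (L[i:=L!j, j:=L!i])) = - sign (perm_of r L)"
proof -
  have swap: "perm_of r (L[i:=L!j, j:=L!i]) = perm_of r L \<circ> Transposition.transpose i j"
    using assms(4,5) by (auto simp: perm_of_def transpose_def fun_eq_iff nth_list_update)
  have "permutation (perm_of r L)"
    using perm_of_permutes[OF assms(1-3)] by (rule permutes_imp_permutation[rotated]) simp
  then show ?thesis using assms(4)
    by (simp add: swap sign_compose permutation_swap_id sign_swap_id)
qed

section \<open>The signed indicators phi_T\<close>

lemma finite_pp_vertices: "finite (pp_vertices d n)"
proof -
  have "pp_vertices d n \<subseteq> {xs. set xs \<subseteq> {1..n} \<and> length xs = d}"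
    by (auto simp: pp_vertices_def)
  moreover have "finite {xs. set xs \<subseteq> {1..n} \<and> length xs = d}"
    by (rule finite_lists_length_eq) simp
  ultimately show ?thesis by (rule finite_subset)
qed

lemma missing_element:
  assumes "v \<in> pp_vertices d n" "set v \<subseteq> T" "card T = Suc d"
  obtains b where "T - set v = {b}"
proof -
  have "finite T" using assms(3) card_ge_0_finite[of T] by simp
  then have "card (T - set v) = 1"
    using assms by (simp add: card_Diff_subset distinct_card pp_vertices_def)
  then show ?thesis using that by (metis card_1_singletonE)
qed

lemma exchange_vertex:
  assumes T: "T \<subseteq> {1..n}" and y: "y \<in> pp_vertices d n" "set y \<subseteq> T"
    and b: "T - set y = {b}" and i: "i < d"
  shows "y[i:=b] \<in> pp_vertices d n" "set (y[i:=b]) \<subseteq> T" "T - set (y[i:=b]) = {y!i}"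
proof -
  have ly: "length y = d" "distinct y" using y by (auto simp: pp_vertices_def)
  have set_y': "set (y[i:=b]) = insert b (set y - {y!i})"
    using ly i by (simp add: set_update_distinct)
  have "b \<in> T" "b \<notin> set y" "y!i \<in> set y" using b ly i by auto
  then show "set (y[i:=b]) \<subseteq> T" "T - set (y[i:=b]) = {y!i}"
    using set_y' y(2) b by auto
  then show "y[i:=b] \<in> pp_vertices d n"
    using T ly \<open>b \<notin> set y\<close> by (simp add: pp_vertices_def distinct_list_update)
qed

definition completion :: "nat set \<Rightarrow> nat list \<Rightarrow> nat list" where
  "completion T v = v @ [the_elem (T - set v)]"

definition phi :: "nat \<Rightarrow> nat \<Rightarrow> nat set \<Rightarrow> nat list \<Rightarrow> real" where
  "phi d n T v = (if v \<in> pp_vertices d n \<and> set v \<subseteq> T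
     then real_of_int (sign (perm_of (sorted_list_of_set T) (completion T v))) else 0)"

lemma phi_support_values:
  assumes "v \<in> pp_vertices d n" "set v \<subseteq> T"
  shows "phi d n T v = 1 \<or> phi d n T v = -1"
  using assms by (auto simp: phi_def sign_def)

lemma phi_values: "phi d n T v \<in> {-1, 0, 1}"
  using phi_support_values[of v d n T] by (cases "v \<in> pp_vertices d n \<and> set v \<subseteq> T")
    (auto simp: phi_def)

lemma phi_outside: "v \<notin> pp_vertices d n \<Longrightarrow> phi d n T v = 0"
  by (simp add: phi_def)

text \<open>Key antisymmetry: the exchange of lemma exchange_vertex swaps positions i and d of
  the completed word, so phi_T changes sign.\<close>
lemma phi_exchange:
  assumes T: "T \<subseteq> {1..n}" "card T = Suc d" and y: "y \<in> pp_vertices d n" "set y \<subseteq> T"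
    and b: "T - set y = {b}" and i: "i < d"
  shows "phi d n T (y[i:=b]) = - phi d n T y"
proof -
  note y' = exchange_vertex[OF T(1) y b i]
  have ly: "length y = d" "distinct y" using y by (auto simp: pp_vertices_def)
  define L where "L = y @ [b]"
  have "finite T" using T(2) card_ge_0_finite[of T] by simp
  then have set_L: "set L = set (sorted_list_of_set T)" using b y(2) by (auto simp: L_def)
  have "completion T y = L" using b by (simp add: completion_def L_def)
  moreover have "completion T (y[i:=b]) = L[i:=L!d, d:=L!i]"
    using y'(3) ly i by (simp add: completion_def L_def nth_append list_update_append)
  moreover have "sign (perm_of (sorted_list_of_set T) (L[i:=L!d, d:=L!i]))
      = - sign (perm_of (sorted_list_of_set T) L)"
    using b ly i set_L by (intro sign_perm_of_swap) (auto simp: L_def)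
  ultimately show ?thesis using y y'(1,2) by (simp add: phi_def)
qed

lemma sorted_vertex:
  assumes "T \<subseteq> {1..n}" "card T = Suc d" "b \<in> T"
  shows "sorted_list_of_set (T - {b}) \<in> pp_vertices d n"
    and "set (sorted_list_of_set (T - {b})) = T - {b}"
proof -
  have "finite T" using assms(2) card_ge_0_finite[of T] by simp
  then show "set (sorted_list_of_set (T - {b})) = T - {b}" by simp
  then show "sorted_list_of_set (T - {b}) \<in> pp_vertices d n"
    using assms \<open>finite T\<close> by (auto simp: pp_vertices_def)
qed

lemma phi_both_signs:
  assumes T: "T \<subseteq> {1..n}" "card T = Suc d" and d: "1 \<le> d"
  shows "(\<exists>v\<in>pp_vertices d n. phi d n T v = -1) \<and> (\<exists>v\<in>pp_vertices d n. phi d n T v = 1)"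
proof -
  obtain b where "b \<in> T" using T(2) by fastforce
  define v where "v = sorted_list_of_set (T - {b})"
  have v: "v \<in> pp_vertices d n" "set v \<subseteq> T" and miss: "T - set v = {b}"
    using sorted_vertex[OF T \<open>b \<in> T\<close>] \<open>b \<in> T\<close> by (auto simp: v_def)
  have "0 < d" using d by simp
  then have "v[0:=b] \<in> pp_vertices d n" and "phi d n T (v[0:=b]) = - phi d n T v"
    using exchange_vertex(1)[OF T(1) v miss] phi_exchange[OF T v miss] by auto
  then show ?thesis using phi_support_values[OF v] v(1) by force
qed

section \<open>Maximal cliques are lines\<close>

definition coord_diff :: "nat \<Rightarrow> nat list \<Rightarrow> nat list \<Rightarrow> nat set" where
  "coord_diff d x y = {j. j < d \<and> x!j \<noteq> y!j}"

lemma pp_adj_coord_diff: "pp_adj d x y \<longleftrightarrow> (\<exists>i. coord_diff d x y = {i})"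
  by (simp add: pp_adj_def coord_diff_def card_1_singleton_iff)

definition line :: "nat \<Rightarrow> nat \<Rightarrow> nat list \<Rightarrow> nat \<Rightarrow> nat list set" where
  "line d n x i = {y \<in> pp_vertices d n. \<forall>j<d. j \<noteq> i \<longrightarrow> y!j = x!j}"

lemma line_clique: "pp_clique d n (line d n x i)"
  unfolding pp_clique_def
proof (intro conjI ballI impI)
  show "line d n x i \<subseteq> pp_vertices d n" by (auto simp: line_def)
next
  fix y z assume y: "y \<in> line d n x i" and z: "z \<in> line d n x i" and "y \<noteq> z"
  have "length y = d" "length z = d" using y z by (auto simp: line_def pp_vertices_def)
  then have "coord_diff d y z \<noteq> {}"
    using \<open>y \<noteq> z\<close> nth_equalityI by (force simp: coord_diff_def)
  moreover have "coord_diff d y z \<subseteq> {i}" using y z by (force simp: line_def coord_diff_def)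
  ultimately show "pp_adj d y z" by (metis pp_adj_coord_diff subset_singletonD)
qed

lemma not_adj_different_directions:
  assumes xy: "coord_diff d x y = {i}" and xz: "coord_diff d x z = {k}" and "k \<noteq> i"
  shows "\<not> pp_adj d y z"
proof -
  have "i < d" "x!i \<noteq> y!i" "x!k = y!k" "k < d" "x!k \<noteq> z!k" "x!i = z!i"
    using xy xz \<open>k \<noteq> i\<close> unfolding coord_diff_def set_eq_iff mem_Collect_eq by (metis insertI1 singletonD)+
  then have "{i, k} \<subseteq> coord_diff d y z" by (auto simp: coord_diff_def)
  moreover have "finite (coord_diff d y z)" by (simp add: coord_diff_def)
  ultimately have "2 \<le> card (coord_diff d y z)"
    using \<open>k \<noteq> i\<close> by (metis card_2_iff card_mono)
  then show ?thesis by (auto simp: pp_adj_coord_diff)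
qed

text \<open>Every clique lies in a line: two distinct members fix a direction i, and by the
  previous lemma every other member differs from the first one only in coordinate i.
  Cliques with at most one element lie in any line through that element (or any vertex).\<close>
lemma clique_in_line:
  assumes K: "pp_clique d n K" and d: "1 \<le> d" "d \<le> n"
  shows "\<exists>x i. i < d \<and> K \<subseteq> line d n x i"
proof (cases "\<exists>x\<in>K. \<exists>y\<in>K. x \<noteq> y")
  case True
  then obtain x y where xy: "x \<in> K" "y \<in> K" "x \<noteq> y" by auto
  have adj: "\<And>u v. u \<in> K \<Longrightarrow> v \<in> K \<Longrightarrow> u \<noteq> v \<Longrightarrow> pp_adj d u v"
    and KV: "K \<subseteq> pp_vertices d n" using K by (auto simp: pp_clique_def)
  obtain i where i: "coord_diff d x y = {i}" using adj[OF xy] by (auto simp: pp_adj_coord_diff)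
  have "coord_diff d x z \<subseteq> {i}" if z: "z \<in> K" for z
  proof (cases "z = x")
    case False
    then obtain k where k: "coord_diff d x z = {k}"
      using adj[OF xy(1) z] by (auto simp: pp_adj_coord_diff)
    have "k = i"
      using not_adj_different_directions[OF i k] adj[OF xy(2) z] i k by fastforce
    then show ?thesis using k by simp
  qed (simp add: coord_diff_def)
  then have "K \<subseteq> line d n x i" using KV by (force simp: line_def coord_diff_def subset_iff)
  moreover have "i < d" using i by (auto simp: coord_diff_def)
  ultimately show ?thesis by blast
next
  case False
  have x0: "[1..<Suc d] \<in> pp_vertices d n" using d by (auto simp: pp_vertices_def)
  obtain x where "x \<in> pp_vertices d n" "K \<subseteq> {x}"
  proof (cases "K = {}")
    case True
    then show ?thesis using that x0 by blast
  next
    case False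
    then obtain x where "x \<in> K" by blast
    then show ?thesis
      using \<open>\<not> (\<exists>x\<in>K. \<exists>y\<in>K. x \<noteq> y)\<close> K by (intro that[of x]) (auto simp: pp_clique_def)
  qed
  then have "K \<subseteq> line d n x 0" by (auto simp: line_def)
  moreover have "0 < d" using d by simp
  ultimately show ?thesis by blast
qed

text \<open>Since lines are cliques, maximality forces equality.\<close>
lemma maximal_clique_is_line:
  assumes "pp_maximal_clique d n K" "1 \<le> d" "d \<le> n"
  shows "\<exists>x i. i < d \<and> K = line d n x i"
  using assms clique_in_line[of d n K] line_clique
  unfolding pp_maximal_clique_def by blast

lemma line_support:
  assumes T: "T \<subseteq> {1..n}" and y: "y \<in> line d n x i" "set y \<subseteq> T"
    and b: "T - set y = {b}" and i: "i < d"
  shows "{z \<in> line d n x i. set z \<subseteq> T} = {y, y[i:=b]}"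
proof (intro equalityI subsetI)
  fix z assume "z \<in> {z \<in> line d n x i. set z \<subseteq> T}"
  then have z: "z \<in> pp_vertices d n" "set z \<subseteq> T" "\<forall>j<d. j \<noteq> i \<longrightarrow> z!j = x!j"
    by (auto simp: line_def)
  have yl: "y \<in> pp_vertices d n" "\<forall>j<d. j \<noteq> i \<longrightarrow> y!j = x!j" using y by (auto simp: line_def)
  have lz: "length z = d" "distinct z" and ly: "length y = d"
    using z(1) yl(1) by (auto simp: pp_vertices_def)
  have z_eq: "z = y[i := z!i]"
    using lz ly z(3) yl(2) i by (intro nth_equalityI) (auto simp: nth_list_update)
  have "z!i \<notin> set y - {y!i}"
  proof
    assume "z!i \<in> set y - {y!i}"
    then obtain j where j: "j < d" "j \<noteq> i" "y!j = z!i" by (metis DiffE in_set_conv_nth insertI1 ly)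
    then have "z!j = z!i" using z(3) yl(2) by simp
    then show False using j lz i by (simp add: nth_eq_iff_index_eq)
  qed
  moreover have "z!i \<in> T" using z(2) lz i by auto
  ultimately have "z!i = y!i \<or> z!i = b" using b by blast
  then show "z \<in> {y, y[i:=b]}" using z_eq by auto
next
  fix z assume "z \<in> {y, y[i:=b]}"
  moreover have "y[i:=b] \<in> line d n x i"
    using exchange_vertex(1)[OF T _ y(2) b i] y by (auto simp: line_def)
  moreover have "set (y[i:=b]) \<subseteq> T"
    using exchange_vertex(2)[OF T _ y(2) b i] y by (auto simp: line_def)
  ultimately show "z \<in> {z \<in> line d n x i. set z \<subseteq> T}" using y by auto
qed

text \<open>Hence the sum of phi_T over a line is 0: the two support points have opposite signs.\<close>
lemma line_sum:
  assumes T: "T \<subseteq> {1..n}" "card T = Suc d" and i: "i < d"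
  shows "(\<Sum>y\<in>line d n x i. phi d n T y) = 0"
proof -
  define A where "A = {y \<in> line d n x i. set y \<subseteq> T}"
  have "finite (line d n x i)"
    by (rule finite_subset[OF _ finite_pp_vertices]) (auto simp: line_def)
  then have "(\<Sum>y\<in>line d n x i. phi d n T y) = (\<Sum>y\<in>A. phi d n T y)"
    by (intro sum.mono_neutral_right) (auto simp: A_def phi_def)
  also have "\<dots> = 0"
  proof (cases "A = {}")
    case False
    then obtain y where y: "y \<in> line d n x i" "set y \<subseteq> T" by (auto simp: A_def)
    then have yV: "y \<in> pp_vertices d n" by (simp add: line_def)
    obtain b where b: "T - set y = {b}" using missing_element[OF yV y(2) T(2)] .
    have "y!i \<in> set y" using yV i by (simp add: pp_vertices_def)
    then have "y!i \<noteq> b" using b by blast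
    moreover have "i < length y" using yV i by (simp add: pp_vertices_def)
    ultimately have "y[i:=b] \<noteq> y" by (metis nth_list_update_eq)
    then have "(\<Sum>y\<in>A. phi d n T y) = phi d n T y + phi d n T (y[i:=b])"
      using line_support[OF T(1) y b i] by (simp add: A_def)
    then show ?thesis using phi_exchange[OF T yV y(2) b i] by simp
  qed simp
  finally show ?thesis .
qed

lemma phi_maximal_clique_sum:
  assumes "T \<subseteq> {1..n}" "card T = Suc d" "1 \<le> d" "d \<le> n" "pp_maximal_clique d n K"
  shows "(\<Sum>v\<in>K. phi d n T v) = 0"
  using maximal_clique_is_line[OF assms(5,3,4)] line_sum[OF assms(1,2)] by auto

section \<open>Linear independence and counting\<close>

lemma lin_indep_on_witnesses:
  assumes I: "finite I"
    and w: "\<And>i. i \<in> I \<Longrightarrow> w i \<in> V \<and> f i (w i) \<noteq> 0"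
    and other: "\<And>i j. i \<in> I \<Longrightarrow> j \<in> I \<Longrightarrow> j \<noteq> i \<Longrightarrow> f j (w i) = 0"
  shows "inj_on f I" "lin_indep_on V (f ` I)"
proof -
  show inj: "inj_on f I"
    by (rule inj_onI) (metis w other)
  show "lin_indep_on V (f ` I)"
    unfolding lin_indep_on_def
  proof (intro allI impI ballI)
    fix c \<phi> assume zero: "\<forall>v\<in>V. (\<Sum>\<psi>\<in>f ` I. c \<psi> * \<psi> v) = 0" and "\<phi> \<in> f ` I"
    then obtain i where i: "i \<in> I" "\<phi> = f i" by auto
    have "(\<Sum>\<psi>\<in>f ` I. c \<psi> * \<psi> (w i)) = (\<Sum>j\<in>I. c (f j) * f j (w i))"
      using inj by (rule sum.reindex_cong) simp_all
    also have "\<dots> = c (f i) * f i (w i) + (\<Sum>j\<in>I - {i}. c (f j) * f j (w i))"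
      using I i(1) by (rule sum.remove)
    also have "(\<Sum>j\<in>I - {i}. c (f j) * f j (w i)) = 0"
      using i(1) other by (intro sum.neutral) auto
    finally show "c \<phi> = 0" using zero w[OF i(1)] i by simp
  qed
qed

text \<open>Choosing a (k+1)-subset of A containing a fixed a is choosing k elements of A - {a}.\<close>
lemma card_subsets_containing:
  assumes "finite A" "a \<in> A"
  shows "card {T. T \<subseteq> A \<and> card T = Suc k \<and> a \<in> T} = (card A - 1) choose k"
proof -
  have eq: "{T. T \<subseteq> A \<and> card T = Suc k \<and> a \<in> T} = insert a ` {B. B \<subseteq> A - {a} \<and> card B = k}"
  proof (intro equalityI subsetI)
    fix T assume "T \<in> {T. T \<subseteq> A \<and> card T = Suc k \<and> a \<in> T}"
    then show "T \<in> insert a ` {B. B \<subseteq> A - {a} \<and> card B = k}"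
      using finite_subset[OF _ assms(1)] by (intro image_eqI[of _ _ "T - {a}"]) auto
  qed (use assms finite_subset in \<open>auto simp: card_insert_if\<close>)
  have "inj_on (insert a) {B. B \<subseteq> A - {a} \<and> card B = k}"
    by (rule inj_onI) (metis Diff_insert_absorb mem_Collect_eq subset_Diff_insert)
  then have "card {T. T \<subseteq> A \<and> card T = Suc k \<and> a \<in> T} = card {B. B \<subseteq> A - {a} \<and> card B = k}"
    unfolding eq by (rule card_image)
  also have "\<dots> = (card A - 1) choose k"
    using assms by (simp add: n_subsets)
  finally show ?thesis .
qed

theorem mainTheorem5:
  fixes d n :: nat
  assumes "1 \<le> d" and "d < n"
  shows "\<exists>F :: (nat list \<Rightarrow> real) set.
    (\<forall>\<phi>\<in>F. (\<forall>v\<in>pp_vertices d n. \<phi> v \<in> {-1, 0, 1}) \<and> (\<forall>v. v \<notin> pp_vertices d n \<longrightarrow> \<phi> v = 0)) \<and>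
    (\<forall>\<phi>\<in>F. (\<exists>v\<in>pp_vertices d n. \<phi> v = -1) \<and> (\<exists>v\<in>pp_vertices d n. \<phi> v = 1)) \<and>
    (\<forall>\<phi>\<in>F. \<forall>K. pp_maximal_clique d n K \<longrightarrow> (\<Sum>v\<in>K. \<phi> v) = 0) \<and>
    (\<exists>S\<subseteq>F. finite S \<and> card S = (n - 1) choose d \<and> lin_indep_on (pp_vertices d n) S)"
proof -
  define TT where "TT = {T. T \<subseteq> {1..n} \<and> card T = Suc d \<and> n \<in> T}"
  define F where "F = phi d n ` TT"
  define w where "w T = sorted_list_of_set (T - {n})" for T
  have TT: "T \<subseteq> {1..n}" "card T = Suc d" "n \<in> T" if "T \<in> TT" for T
    using that by (auto simp: TT_def)
  have finite_TT: "finite TT" by (rule finite_subset[of _ "Pow {1..n}"]) (auto simp: TT_def)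
  have card_TT: "card TT = (n - 1) choose d"
    using card_subsets_containing[of "{1..n}" n d] assms by (simp add: TT_def)
  (* The witness w T lies in the support of phi_T' only if T - {n} \<subseteq> T', i.e. T = T'. *)
  have witness: "w T \<in> pp_vertices d n \<and> phi d n T (w T) \<noteq> 0" if "T \<in> TT" for T
    using sorted_vertex[OF TT[OF that]] phi_support_values[of "w T" d n T] by (force simp: w_def)
  have other: "phi d n T' (w T) = 0" if "T \<in> TT" "T' \<in> TT" "T' \<noteq> T" for T T'
  proof (rule ccontr)
    assume "phi d n T' (w T) \<noteq> 0"
    then have "T - {n} \<subseteq> T'"
      using sorted_vertex(2)[OF TT[OF that(1)]] by (auto simp: phi_def w_def split: if_splits)
    then have "T \<subseteq> T'" using TT[OF that(2)] by auto
    moreover have "finite T'" using TT(1)[OF that(2)] finite_subset by blast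
    ultimately have "T = T'" using card_subset_eq TT(2) that(1,2) by metis
    then show False using that(3) by simp
  qed
  note indep = lin_indep_on_witnesses[of TT w "pp_vertices d n" "phi d n", OF finite_TT witness other]
  have ternary: "\<forall>\<phi>\<in>F. (\<forall>v\<in>pp_vertices d n. \<phi> v \<in> {-1, 0, 1}) \<and> (\<forall>v. v \<notin> pp_vertices d n \<longrightarrow> \<phi> v = 0)"
    using phi_values phi_outside by (auto simp: F_def)
  have signs: "\<forall>\<phi>\<in>F. (\<exists>v\<in>pp_vertices d n. \<phi> v = -1) \<and> (\<exists>v\<in>pp_vertices d n. \<phi> v = 1)"
    unfolding F_def using phi_both_signs[OF TT(1,2) assms(1)] by blast
  have cliques: "\<forall>\<phi>\<in>F. \<forall>K. pp_maximal_clique d n K \<longrightarrow> (\<Sum>v\<in>K. \<phi> v) = 0"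
    unfolding F_def using phi_maximal_clique_sum[OF TT(1,2) assms(1) less_imp_le[OF assms(2)]] by blast
  have "finite F" "card F = (n - 1) choose d" "lin_indep_on (pp_vertices d n) F"
    using finite_TT card_TT card_image[OF indep(1)] indep(2) by (simp_all add: F_def)
  then show ?thesis using ternary signs cliques by (intro exI[of _ F]) blast
qed

end
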